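(* Let $V$ be a vertex algebra, $M_1,M_2,M_3$ be $V$-modules and $\mathcal Y:M_1\to\mathrm{Hom}(M_2,M_3[[z]]z^{-S})$, $a\mapsto\mathcal Y(a,z)=\sum_{n\in\mathbb C}a_{(n)}z^{-n-1}$, a linear map satisfying $T\mathcal Y(a,z)-\mathcal Y(a,z)T=\mathcal Y(Ta,z)=\partial_z\mathcal Y(a,z)$. Then $\mathcal Y$ satisfies the Jacobi identity $$\iota_{z_1,z_2}(z_1-z_2)^{n}Y(v,z_1)\mathcal{Y}(a,z_2)-\iota_{z_2,z_1}(z_1-z_2)^{n}\mathcal{Y}(a,z_2)Y(v,z_1)=\sum_{i\ge0}\mathcal Y(v_{(n+i)}a,z_2)\,\partial^{(i)}_{z_2}\delta(z_1,z_2)$$ for all $v\in V$, $a\in M_1$ and $n\in\mathbb Z$ if and only if for all $v\in V$, $a\in M_1$, $b\in M_2$ the following two identities hold: $$\mathcal Y(v_{(-1)}a,z)b=Y_+(v,z)\mathcal Y(a,z)b+\mathcal Y(a,z)Y_-(v,z)b,$$ $$Y(v,z_1)\mathcal Y(a,z_2)b-\mathcal Y(a,z_2)Y(v,z_1)b=\sum_{i\ge0}\mathcal Y(v_{(i)}a,z_2)b\,\partial^{(i)}_{z_2}\delta(z_1,z_2).$$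
   Context: $V$ is a vertex algebra with fields $Y(v,z)=\sum_{n\in\mathbb Z}v_{(n)}z^{-n-1}$. A $V$-module is a vector space $M$ with $T\in\mathrm{End}(M)$ and fields $Y^M(v,z)=\sum_{n\in\mathbb Z}v_{(n)}z^{-n-1}\in\mathrm{Hom}(M,M((z)))$ with $Y^M(\mathbf1,z)=\mathrm{id}$, $[T,Y^M(v,z)]=\partial_zY^M(v,z)$ and the Jacobi identity above (with $\mathcal Y$ replaced by $Y^M$); on modules $Y(v,z)$ denotes $Y^M(v,z)$. $S\subset\mathbb C$ satisfies $S+\mathbb Z=S$, $S/\mathbb Z$ finite, and $U[[z]]z^{-S}$ denotes formal sums $\sum_nf_nz^n$ with $n$ in a finite union of sets $-d+\mathbb Z_{\ge0}$, $d\in S$. $\iota_{z_1,z_2}$ denotes expansion in nonnegative powers of $z_2$ (domain $|z_1|>|z_2|$), $\delta(z_1,z_2)=\sum_{n\in\mathbb Z}z_1^nz_2^{-n-1}$, $\partial^{(i)}_{z}=\partial_z^i/i!$, $Y_+(v,z):=\sum_{n<0}v_{(n)}z^{-n-1}$ and $Y_-(v,z):=\sum_{n\ge0}v_{(n)}z^{-n-1}$. *)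

theory Defs
  imports Complex_Main "HOL-Library.Groups_Big_Fun"
begin

text \<open>
  All vector spaces are over the complex numbers; a space of type 'x is
  given by its scalar multiplication s :: complex => 'x => 'x (required to satisfy the
  vector_space axioms).  A field Y(v,z) = sum_n v_(n) z^(-n-1) is encoded by its modes:
  act v n x is v_(n) x.  An operator-valued series YY(a,z) = sum_{n in C} a_(n) z^(-n-1)
  is encoded by YY a n b = a_(n) b (n complex).  Identities between formal series are
  stated coefficientwise; the (possibly infinite looking) sums over j, i >= 0 are written
  with Sum_any (sum over the finite support), and are finite under the truncation
  hypotheses.
\<close>

text \<open>Coefficient of z1^(-m-1) z2^(-k-1) in the Jacobi identity
  iota_{z1,z2}(z1-z2)^n Y(v,z1) YY(a,z2) b - iota_{z2,z1}(z1-z2)^n YY(a,z2) Y(v,z1) b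
    = sum_{i>=0} YY(v_(n+i) a, z2) b  d^(i)_{z2} delta(z1,z2).
  Here act3 is Y(v,.) on the target space, act2 is Y(v,.) on the source space of YY(a,.),
  act1 is Y(v,.) on the space containing a, and s3 the scalar multiplication of the target.\<close>
definition jacobi_coeff ::
  "(complex \<Rightarrow> 'c \<Rightarrow> 'c) \<Rightarrow> ('v \<Rightarrow> int \<Rightarrow> 'c \<Rightarrow> 'c) \<Rightarrow>
   ('a \<Rightarrow> 'k::comm_ring_1 \<Rightarrow> 'b \<Rightarrow> 'c::ab_group_add) \<Rightarrow>
   ('v \<Rightarrow> int \<Rightarrow> 'b \<Rightarrow> 'b) \<Rightarrow> ('v \<Rightarrow> int \<Rightarrow> 'a \<Rightarrow> 'a) \<Rightarrow>
   'v \<Rightarrow> 'a \<Rightarrow> 'b \<Rightarrow> int \<Rightarrow> int \<Rightarrow> 'k \<Rightarrow> bool" where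
  "jacobi_coeff s3 act3 YY act2 act1 v a b n m k \<longleftrightarrow>
     (\<Sum>j::nat. s3 ((-1) ^ j * ((of_int n :: complex) gchoose j))
                    (act3 v (m + n - int j) (YY a (k + of_nat j) b)))
   - (\<Sum>j::nat. s3 ((-1::complex) powi (n + int j) * ((of_int n :: complex) gchoose j))
                    (YY a (k + of_int n - of_nat j) (act2 v (m + int j) b)))
   = (\<Sum>i::nat. s3 ((of_int m :: complex) gchoose i)
                    (YY (act1 v (n + int i) a) (of_int m + k - of_nat i) b))"

text \<open>Coefficient of z^(-k-1) in YY(v_(-1)a,z)b = Y_+(v,z)YY(a,z)b + YY(a,z)Y_-(v,z)b.\<close>
definition normal_order_coeff ::
  "('v \<Rightarrow> int \<Rightarrow> 'c \<Rightarrow> 'c) \<Rightarrow>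
   ('a \<Rightarrow> 'k::comm_ring_1 \<Rightarrow> 'b \<Rightarrow> 'c::ab_group_add) \<Rightarrow>
   ('v \<Rightarrow> int \<Rightarrow> 'b \<Rightarrow> 'b) \<Rightarrow> ('v \<Rightarrow> int \<Rightarrow> 'a \<Rightarrow> 'a) \<Rightarrow>
   'v \<Rightarrow> 'a \<Rightarrow> 'b \<Rightarrow> 'k \<Rightarrow> bool" where
  "normal_order_coeff act3 YY act2 act1 v a b k \<longleftrightarrow>
     YY (act1 v (-1) a) k b =
       (\<Sum>j::nat. act3 v (-1 - int j) (YY a (k + of_nat j) b))
     + (\<Sum>j::nat. YY a (k - 1 - of_nat j) (act2 v (int j) b))"

text \<open>Coefficient of z1^(-m-1) z2^(-k-1) in
  Y(v,z1)YY(a,z2)b - YY(a,z2)Y(v,z1)b = sum_{i>=0} YY(v_(i)a,z2)b d^(i)_{z2}delta(z1,z2).\<close>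
definition commutator_coeff ::
  "(complex \<Rightarrow> 'c \<Rightarrow> 'c) \<Rightarrow> ('v \<Rightarrow> int \<Rightarrow> 'c \<Rightarrow> 'c) \<Rightarrow>
   ('a \<Rightarrow> 'k::comm_ring_1 \<Rightarrow> 'b \<Rightarrow> 'c::ab_group_add) \<Rightarrow>
   ('v \<Rightarrow> int \<Rightarrow> 'b \<Rightarrow> 'b) \<Rightarrow> ('v \<Rightarrow> int \<Rightarrow> 'a \<Rightarrow> 'a) \<Rightarrow>
   'v \<Rightarrow> 'a \<Rightarrow> 'b \<Rightarrow> int \<Rightarrow> 'k \<Rightarrow> bool" where
  "commutator_coeff s3 act3 YY act2 act1 v a b m k \<longleftrightarrow>
     act3 v m (YY a k b) - YY a k (act2 v m b)
       = (\<Sum>i::nat. s3 ((of_int m :: complex) gchoose i)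
                      (YY (act1 v (int i) a) (of_int m + k - of_nat i) b))"

text \<open>Vertex algebra (V, vacuum, T, Y) with Y(v,z) = sum_n v_(n) z^(-n-1):
  Y linear in v, each v_(n) linear, Y(v,z)w in V((z)), Y(1,z) = id, Y(v,z)1 = v + O(z),
  T linear with T 1 = 0 and [T,Y(v,z)] = d/dz Y(v,z), and the Jacobi identity.\<close>
definition vertex_algebra ::
  "(complex \<Rightarrow> 'v::ab_group_add \<Rightarrow> 'v) \<Rightarrow> 'v \<Rightarrow> ('v \<Rightarrow> 'v) \<Rightarrow> ('v \<Rightarrow> int \<Rightarrow> 'v \<Rightarrow> 'v) \<Rightarrow> bool" where
  "vertex_algebra sV vac TV Y \<longleftrightarrow>
     vector_space sV \<and>
     (\<forall>v n. Vector_Spaces.linear sV sV (Y v n)) \<and>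
     (\<forall>n w. Vector_Spaces.linear sV sV (\<lambda>v. Y v n w)) \<and>
     (\<forall>v w. \<exists>N. \<forall>n\<ge>N. Y v n w = 0) \<and>
     (\<forall>n w. Y vac n w = (if n = -1 then w else 0)) \<and>
     (\<forall>v n. n \<ge> 0 \<longrightarrow> Y v n vac = 0) \<and>
     (\<forall>v. Y v (-1) vac = v) \<and>
     Vector_Spaces.linear sV sV TV \<and> TV vac = 0 \<and>
     (\<forall>v n w. TV (Y v n w) - Y v n (TV w) = sV (- of_int n) (Y v (n - 1) w)) \<and>
     (\<forall>v a w n m k. jacobi_coeff sV Y Y Y Y v a w n m k)"

definition va_module ::
  "(complex \<Rightarrow> 'v::ab_group_add \<Rightarrow> 'v) \<Rightarrow> 'v \<Rightarrow> ('v \<Rightarrow> int \<Rightarrow> 'v \<Rightarrow> 'v) \<Rightarrow>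
   (complex \<Rightarrow> 'm::ab_group_add \<Rightarrow> 'm) \<Rightarrow> ('m \<Rightarrow> 'm) \<Rightarrow> ('v \<Rightarrow> int \<Rightarrow> 'm \<Rightarrow> 'm) \<Rightarrow> bool" where
  "va_module sV vac Y sM TM YM \<longleftrightarrow>
     vector_space sM \<and>
     (\<forall>v n. Vector_Spaces.linear sM sM (YM v n)) \<and>
     (\<forall>n x. Vector_Spaces.linear sV sM (\<lambda>v. YM v n x)) \<and>
     (\<forall>v x. \<exists>N. \<forall>n\<ge>N. YM v n x = 0) \<and>
     (\<forall>n x. YM vac n x = (if n = -1 then x else 0)) \<and>
     Vector_Spaces.linear sM sM TM \<and>
     (\<forall>v n x. TM (YM v n x) - YM v n (TM x) = sM (- of_int n) (YM v (n - 1) x)) \<and>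
     (\<forall>v a x n m k. jacobi_coeff sM YM YM YM Y v a x n m k)"

definition admissible_exponents :: "complex set \<Rightarrow> bool" where
  "admissible_exponents S \<longleftrightarrow>
     (\<forall>s\<in>S. \<forall>k::int. s + of_int k \<in> S) \<and>
     finite ((\<lambda>s. {s + of_int k | k::int. True}) ` S)"

text \<open>YY(a,z) b = sum_n a_(n) b z^(-n-1) lies in M3[[z]]z^(-S): the exponents -n-1 with
  nonzero coefficient lie in a finite union of sets -d + Z_{>=0}, d in S.\<close>
definition in_series_S :: "complex set \<Rightarrow> (complex \<Rightarrow> 'c::zero) \<Rightarrow> bool" where
  "in_series_S S f \<longleftrightarrow>
     (\<exists>D. finite D \<and> D \<subseteq> S \<and>
        (\<forall>n. f n \<noteq> 0 \<longrightarrow> (\<exists>d\<in>D. \<exists>j::nat. - n - 1 = - d + of_nat j)))"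

end

theory Submission
  imports Defs
begin

text \<open>
  Write D_n(v; m, k) for the coefficient of z1^(-m-1) z2^(-k-1) in the difference of the two
  sides of the Jacobi identity. Since (z1 - z2)^(n+1) = (z1 - z2)(z1 - z2)^n, the defect obeys
  the Pascal recursion D_(n+1)(m, k) = D_n(m+1, k) - D_n(m, k+1), and the translation covariance
  Y(Tv, z) = d/dz Y(v, z) of the module fields gives D_n(Tv; 0, k) = -n D_(n-1)(v; 0, k).
  For n = 0 the Jacobi identity is the commutator formula, for n = -1 and m = 0 it is the
  normal-order formula. Conversely, these two cases start an induction: translation
  propagates D_(-1)(0, k) = 0 to D_n(0, k) = 0 for all n < 0, the recursion propagates
  D_0 = 0 upwards, and downwards it makes D_n(m, k) a function of m + k, which vanishes
  because it does at m = 0.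
\<close>

lemma Sum_any_negf: "Sum_any (\<lambda>j. - f j) = - (Sum_any f :: 'a::ab_group_add)"
  unfolding Sum_any.expand_set by (simp add: sum_negf)

lemma Sum_any_diff:
  fixes f g :: "'b \<Rightarrow> 'a::ab_group_add"
  assumes "finite {j. f j \<noteq> 0}" and "finite {j. g j \<noteq> 0}"
  shows "Sum_any (\<lambda>j. f j - g j) = Sum_any f - Sum_any g"
  using Sum_any.distrib[OF assms(1), of "\<lambda>j. - g j"] assms(2) by (simp add: Sum_any_negf)

lemma Sum_any_single:
  assumes "\<And>j. j \<noteq> j0 \<Longrightarrow> f j = 0"
  shows "Sum_any f = f j0"
  using Sum_any.expand_superset[of "{j0}" f] assms by auto

lemma Sum_any_if_int_eq:
  "Sum_any (\<lambda>j::nat. if int j = c then y else 0) = (if 0 \<le> c then y else (0::'a::comm_monoid_add))"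
proof (cases "0 \<le> c")
  case True
  then have "\<And>j. int j = c \<longleftrightarrow> j = nat c" by auto
  then show ?thesis using True by simp
qed simp

lemma finite_support_Suc:
  "finite {j. f j \<noteq> 0} \<Longrightarrow> finite {j. f (Suc j) \<noteq> 0}"
  using finite_vimageI[of "{j. f j \<noteq> 0}" Suc] by (simp add: vimage_def)

lemma Sum_any_nat_shift:
  fixes f :: "nat \<Rightarrow> 'a::comm_monoid_add"
  assumes "finite {j. f j \<noteq> 0}"
  shows "Sum_any f = f 0 + Sum_any (\<lambda>j. f (Suc j))"
proof -
  obtain N where N: "{j. f j \<noteq> 0} \<subseteq> {..<N}"
    using assms by (auto simp: finite_nat_set_iff_bounded)
  have "Sum_any f = sum f {..<Suc N}"
    using N by (intro Sum_any.expand_superset) auto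
  moreover have "Sum_any (\<lambda>j. f (Suc j)) = (\<Sum>j<N. f (Suc j))"
    using N by (intro Sum_any.expand_superset) auto
  ultimately show ?thesis by (metis sum.lessThan_Suc_shift)
qed

lemma (in module) scale_Sum_any:
  assumes "finite {j. f j \<noteq> 0}"
  shows "scale c (Sum_any f) = Sum_any (\<lambda>j. scale c (f j))"
proof -
  have "Sum_any (\<lambda>j. scale c (f j)) = (\<Sum>j\<in>{j. f j \<noteq> 0}. scale c (f j))"
    using assms by (intro Sum_any.expand_superset) auto
  then show ?thesis by (simp add: Sum_any.expand_set scale_sum_right)
qed

lemma finite_support_truncated:
  fixes h :: "int \<Rightarrow> 'a::zero"
  assumes "\<exists>N. \<forall>n\<ge>N. h n = 0"
  shows "finite {j::nat. h (m + int j) \<noteq> 0}"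
proof -
  obtain N where "\<forall>n\<ge>N. h n = 0" using assms by blast
  then have "j < nat (N - m)" if "h (m + int j) \<noteq> 0" for j
    using that by (cases "N \<le> m + int j") (auto simp: zless_nat_eq_int_zless)
  then have "{j. h (m + int j) \<noteq> 0} \<subseteq> {..<nat (N - m)}" by blast
  then show ?thesis by (rule finite_subset) simp
qed

lemma in_series_S_finite_support:
  assumes "in_series_S S f"
  shows "finite {j::nat. f (k + of_nat j) \<noteq> 0}"
proof -
  obtain D where D: "finite D"
    and exps: "\<And>n. f n \<noteq> 0 \<Longrightarrow> \<exists>d\<in>D. \<exists>j::nat. - n - 1 = - d + of_nat j"
    using assms unfolding in_series_S_def by blast
  define B where "B = Max (insert 0 (Re ` D))"
  have B: "Re d \<le> B" if "d \<in> D" for d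
    unfolding B_def using D that by auto
  have "{j. f (k + of_nat j) \<noteq> 0} \<subseteq> {..<nat \<lceil>B - Re k\<rceil>}"
  proof
    fix j assume "j \<in> {j. f (k + of_nat j) \<noteq> 0}"
    then obtain d and i :: nat where "d \<in> D" and "- (k + of_nat j) - 1 = - d + of_nat i"
      using exps by blast
    then have "Re d = Re k + j + 1 + i" and "Re d \<le> B"
      using B by (simp_all add: complex_eq_iff)
    then have "real j < B - Re k" by linarith
    then have "int j < \<lceil>B - Re k\<rceil>" by (simp add: less_ceiling_iff)
    then show "j \<in> {..<nat \<lceil>B - Re k\<rceil>}" by (simp add: zless_nat_eq_int_zless)
  qed
  then show ?thesis by (rule finite_subset) simp
qed

lemma gbinomial_minus_one: "(-1::'a::field_char_0) ^ j * ((-1) gchoose j) = 1"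
  using gbinomial_minus[of "1::'a" j] binomial_gbinomial[of j j, where 'a = 'a]
  by (simp flip: power_mult_distrib)

lemma gbinomial_minus_two: "(-1::'a::field_char_0) ^ j * ((-2) gchoose j) = of_nat (Suc j)"
  using gbinomial_minus[of "2::'a" j] binomial_gbinomial[of "Suc j" j, where 'a = 'a]
  by (simp add: add.commute flip: power_mult_distrib)

lemma shift_invariant_constant:
  fixes F :: "int \<Rightarrow> 'k::ring_1 \<Rightarrow> 'a"
  assumes shift: "\<And>m k. F (m + 1) k = F m (k + 1)" and zero: "\<And>k. F 0 k = c"
  shows "F m k = c"
proof -
  have "\<forall>k. F m k = F 0 (k + of_int m)"
  proof (induction m rule: int_induct[where k = 0])
    case (step1 i)
    have "F (i + 1) k = F 0 (k + of_int (i + 1))" for k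
      using shift[of i k] step1(2) by (simp add: add_ac)
    then show ?case by blast
  next
    case (step2 i)
    have "F (i - 1) k = F 0 (k + of_int (i - 1))" for k
      using shift[of "i - 1" "k - 1"] step2(2) by (simp add: algebra_simps)
    then show ?case by blast
  qed simp
  then show ?thesis using zero by simp
qed

lemma va_module_translation:
  assumes VA: "vertex_algebra sV vac TV Y" and M: "va_module sV vac Y sM TM YM"
  shows "YM (TV v) n x = sM (- of_int n) (YM v (n - 1) x)"
proof -
  have TV_eq: "TV v = Y v (-2) vac"
  proof -
    have "vector_space sV" and Y_linear: "Vector_Spaces.linear sV sV (Y v (-1))"
      and "Y v (-1) vac = v" and "TV vac = 0"
      and T_der: "\<And>v n w. TV (Y v n w) - Y v n (TV w) = sV (- of_int n) (Y v (n - 1) w)"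
      using VA unfolding vertex_algebra_def by auto
    interpret module sV
      using \<open>vector_space sV\<close> by (simp add: module_iff_vector_space)
    show ?thesis
      using T_der[of v "-1" vac] module_hom.zero[OF module_hom_linearI[OF Y_linear]]
        \<open>Y v (-1) vac = v\<close> \<open>TV vac = 0\<close> by simp
  qed
  have vs: "vector_space sM" and YM_linear: "\<And>v m. Vector_Spaces.linear sM sM (YM v m)"
    and vac_modes: "\<And>m y. YM vac m y = (if m = -1 then y else 0)"
    and "jacobi_coeff sM YM YM YM Y v vac x (-2) 0 n"
    using M unfolding va_module_def by auto
  interpret module sM using vs by (simp add: module_iff_vector_space)
  have YM_0: "YM v m 0 = 0" for v m
    using module_hom.zero[OF module_hom_linearI[OF YM_linear]] .
  \<comment> \<open>This is the Jacobi identity of M at a = 1, n = -2, m = 0: its delta-function side is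
    (v_(-2) 1)_(n) x = (Tv)_(n) x, and only the mode 1_(-1) survives in the two products.\<close>
  have prod: "sM ((-1) ^ j * (of_int (-2) gchoose j)) (YM v (0 + -2 - int j) (YM vac (n + int j) x))
      = (if int j = -1 - n then sM (- of_int n) (YM v (n - 1) x) else 0)" for j
  proof (cases "int j = -1 - n")
    case True
    have "(of_nat (Suc j) :: complex) = of_int (int j + 1)" by simp
    also have "\<dots> = - of_int n" unfolding True by simp
    finally show ?thesis using True by (simp add: vac_modes gbinomial_minus_two)
  qed (auto simp: vac_modes YM_0)
  have rev_prod: "sM ((-1) powi (-2 + int j) * (of_int (-2) gchoose j))
        (YM vac (n + of_int (-2) - of_nat j) (YM v (0 + int j) x))
      = (if int j = n - 1 then sM (of_int n) (YM v (n - 1) x) else 0)" for j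
  proof (cases "int j = n - 1")
    case True
    have "(-1::complex) powi (-2 + int j) = (-1) ^ j"
      by (simp add: power_int_diff)
    moreover have "(of_nat (Suc j) :: complex) = of_int (int j + 1)" by simp
    then have "(of_nat (Suc j) :: complex) = of_int n" unfolding True by simp
    ultimately show ?thesis using True by (simp add: vac_modes gbinomial_minus_two)
  qed (auto simp: vac_modes)
  have iter: "Sum_any (\<lambda>i. sM ((of_int 0::complex) gchoose i) (YM (Y v (-2 + int i) vac) (of_int 0 + n - of_nat i) x))
      = YM (TV v) n x"
    by (subst Sum_any_single[of 0]) (auto simp: TV_eq gbinomial_0_left)
  have "YM (TV v) n x = (if 0 \<le> -1 - n then sM (- of_int n) (YM v (n - 1) x) else 0)
                       - (if 0 \<le> n - 1 then sM (of_int n) (YM v (n - 1) x) else 0)"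
    using \<open>jacobi_coeff sM YM YM YM Y v vac x (-2) 0 n\<close>
    unfolding jacobi_coeff_def prod rev_prod iter Sum_any_if_int_eq by simp
  then show ?thesis by (cases "n = 0") auto
qed

locale jacobi_terms =
  fixes s1 :: "complex \<Rightarrow> 'm1::ab_group_add \<Rightarrow> 'm1"
    and s2 :: "complex \<Rightarrow> 'm2::ab_group_add \<Rightarrow> 'm2"
    and s3 :: "complex \<Rightarrow> 'm3::ab_group_add \<Rightarrow> 'm3"
    and Y1 :: "'v \<Rightarrow> int \<Rightarrow> 'm1 \<Rightarrow> 'm1"
    and Y2 :: "'v \<Rightarrow> int \<Rightarrow> 'm2 \<Rightarrow> 'm2"
    and Y3 :: "'v \<Rightarrow> int \<Rightarrow> 'm3 \<Rightarrow> 'm3"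
    and YY :: "'m1 \<Rightarrow> complex \<Rightarrow> 'm2 \<Rightarrow> 'm3"
    and TV :: "'v \<Rightarrow> 'v"
  assumes vector_space_M3: "vector_space s3"
    and Y3_linear: "\<And>v n. Vector_Spaces.linear s3 s3 (Y3 v n)"
    and YY_linear1: "\<And>n b. Vector_Spaces.linear s1 s3 (\<lambda>a. YY a n b)"
    and YY_linear2: "\<And>a n. Vector_Spaces.linear s2 s3 (YY a n)"
    and YY_finite_support: "\<And>a b k. finite {j::nat. YY a (k + of_nat j) b \<noteq> 0}"
    and Y1_truncated: "\<And>v a. \<exists>N. \<forall>n\<ge>N. Y1 v n a = 0"
    and Y2_truncated: "\<And>v b. \<exists>N. \<forall>n\<ge>N. Y2 v n b = 0"
    and Y1_translation: "\<And>v n x. Y1 (TV v) n x = s1 (- of_int n) (Y1 v (n - 1) x)"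
    and Y2_translation: "\<And>v n x. Y2 (TV v) n x = s2 (- of_int n) (Y2 v (n - 1) x)"
    and Y3_translation: "\<And>v n x. Y3 (TV v) n x = s3 (- of_int n) (Y3 v (n - 1) x)"
begin

interpretation M3: vector_space s3
  by (rule vector_space_M3)

lemma Y3_zero: "Y3 v n 0 = 0"
  using module_hom.zero[OF module_hom_linearI[OF Y3_linear]] .

lemma YY_zero1: "YY 0 n b = 0"
  using module_hom.zero[OF module_hom_linearI[OF YY_linear1]] .

lemma YY_zero2: "YY a n 0 = 0"
  using module_hom.zero[OF module_hom_linearI[OF YY_linear2]] .

lemma YY_scale1: "YY (s1 c a) n b = s3 c (YY a n b)"
  using module_hom.scale[OF module_hom_linearI[OF YY_linear1]] .

lemma YY_scale2: "YY a n (s2 c b) = s3 c (YY a n b)"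
  using module_hom.scale[OF module_hom_linearI[OF YY_linear2]] .

text \<open>The coefficients at z1^(-m-1) z2^(-k-1) of iota_{z1,z2}(z1-z2)^n Y(v,z1)YY(a,z2)b,
  of iota_{z2,z1}(z1-z2)^n YY(a,z2)Y(v,z1)b and of the delta-function side.\<close>

definition prod_term where
  "prod_term v a b n m k = Sum_any (\<lambda>j::nat. s3 ((-1) ^ j * ((of_int n :: complex) gchoose j))
     (Y3 v (m + n - int j) (YY a (k + of_nat j) b)))"

definition rev_prod_term where
  "rev_prod_term v a b n m k = Sum_any (\<lambda>j::nat. s3 ((-1::complex) powi (n + int j) * (of_int n gchoose j))
     (YY a (k + of_int n - of_nat j) (Y2 v (m + int j) b)))"

definition iterate_term where
  "iterate_term v a b n m k = Sum_any (\<lambda>i::nat. s3 ((of_int m :: complex) gchoose i)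
     (YY (Y1 v (n + int i) a) (of_int m + k - of_nat i) b))"

definition jacobi_defect where
  "jacobi_defect v a b n m k = prod_term v a b n m k - rev_prod_term v a b n m k - iterate_term v a b n m k"

lemma jacobi_coeff_iff_defect:
  "jacobi_coeff s3 Y3 YY Y2 Y1 v a b n m k \<longleftrightarrow> jacobi_defect v a b n m k = 0"
  unfolding jacobi_coeff_def jacobi_defect_def prod_term_def rev_prod_term_def iterate_term_def
  by (rule eq_iff_diff_eq_0)

lemma finite_prod_summands: "finite {j. s3 (c j) (Y3 v (q j) (YY a (k + of_nat j) b)) \<noteq> 0}"
  by (rule finite_subset[OF _ YY_finite_support[of a k b]]) (auto simp: Y3_zero)

lemma finite_rev_prod_summands: "finite {j. s3 (c j) (YY a (r j) (Y2 v (m + int j) b)) \<noteq> 0}"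
  by (rule finite_subset[OF _ finite_support_truncated[OF Y2_truncated[of v b], of m]])
    (auto simp: YY_zero2)

lemma finite_iterate_summands: "finite {i. s3 (c i) (YY (Y1 v (n + int i) a) (r i) b) \<noteq> 0}"
  by (rule finite_subset[OF _ finite_support_truncated[OF Y1_truncated[of v a], of n]])
    (auto simp: YY_zero1)

lemma prod_term_Suc:
  "prod_term v a b (n + 1) m k = prod_term v a b n (m + 1) k - prod_term v a b n m (k + 1)"
proof -
  define f where "f j = s3 ((-1) ^ j * ((of_int (n + 1) :: complex) gchoose j))
    (Y3 v (m + (n + 1) - int j) (YY a (k + of_nat j) b))" for j
  define g where "g j = s3 ((-1) ^ j * ((of_int n :: complex) gchoose j))
    (Y3 v ((m + 1) + n - int j) (YY a (k + of_nat j) b))" for j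
  define h where "h j = s3 ((-1) ^ j * ((of_int n :: complex) gchoose j))
    (Y3 v (m + n - int j) (YY a ((k + 1) + of_nat j) b))" for j
  have fin: "finite {j. f j \<noteq> 0}" "finite {j. g j \<noteq> 0}" "finite {j. h j \<noteq> 0}"
    unfolding f_def g_def h_def by (rule finite_prod_summands)+
  have pascal: "f (Suc j) = g (Suc j) - h j" for j
  proof -
    have "(-1::complex) ^ Suc j * (of_int (n + 1) gchoose Suc j)
        = (-1) ^ Suc j * (of_int n gchoose Suc j) - (-1) ^ j * (of_int n gchoose j)"
      using gbinomial_Suc_Suc[of "of_int n :: complex" j] by (simp add: algebra_simps)
    then show ?thesis
      unfolding f_def g_def h_def by (simp add: M3.scale_left_diff_distrib add_ac)
  qed
  have "f 0 = g 0" unfolding f_def g_def by (simp add: add_ac)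
  then have "Sum_any f = Sum_any g - Sum_any h"
    using Sum_any_nat_shift[OF fin(1)] Sum_any_nat_shift[OF fin(2)]
      Sum_any_diff[OF finite_support_Suc[OF fin(2)] fin(3)] by (simp add: pascal)
  then show ?thesis unfolding prod_term_def f_def g_def h_def .
qed

lemma rev_prod_term_Suc:
  "rev_prod_term v a b (n + 1) m k = rev_prod_term v a b n (m + 1) k - rev_prod_term v a b n m (k + 1)"
proof -
  define f where "f j = s3 ((-1::complex) powi ((n + 1) + int j) * (of_int (n + 1) gchoose j))
    (YY a (k + of_int (n + 1) - of_nat j) (Y2 v (m + int j) b))" for j
  define g where "g j = s3 ((-1::complex) powi (n + int j) * (of_int n gchoose j))
    (YY a (k + of_int n - of_nat j) (Y2 v ((m + 1) + int j) b))" for j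
  define h where "h j = s3 ((-1::complex) powi (n + int j) * (of_int n gchoose j))
    (YY a ((k + 1) + of_int n - of_nat j) (Y2 v (m + int j) b))" for j
  have fin: "finite {j. f j \<noteq> 0}" "finite {j. g j \<noteq> 0}" "finite {j. h j \<noteq> 0}"
    unfolding f_def g_def h_def by (rule finite_rev_prod_summands)+
  have pascal: "f (Suc j) = g j - h (Suc j)" for j
  proof -
    have "(-1::complex) powi ((n + 1) + int (Suc j)) * (of_int (n + 1) gchoose Suc j)
        = (-1) powi (n + int j) * (of_int n gchoose j)
          - (-1) powi (n + int (Suc j)) * (of_int n gchoose Suc j)"
      using gbinomial_Suc_Suc[of "of_int n :: complex" j]
      by (simp add: power_int_minus_left algebra_simps)
    moreover have "k + of_int (n + 1) - of_nat (Suc j) = k + of_int n - of_nat j"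
      "k + 1 + of_int n - of_nat (Suc j) = k + of_int n - of_nat j"
      "m + int (Suc j) = m + 1 + int j" by simp_all
    ultimately show ?thesis
      unfolding f_def g_def h_def by (simp only: M3.scale_left_diff_distrib)
  qed
  have "f 0 = - h 0" unfolding f_def h_def by (simp add: add_ac power_int_minus_left)
  then have "Sum_any f = Sum_any g - Sum_any h"
    using Sum_any_nat_shift[OF fin(1)] Sum_any_nat_shift[OF fin(3)]
      Sum_any_diff[OF fin(2) finite_support_Suc[OF fin(3)]] by (simp add: pascal)
  then show ?thesis unfolding rev_prod_term_def f_def g_def h_def .
qed

lemma iterate_term_Suc:
  "iterate_term v a b (n + 1) m k = iterate_term v a b n (m + 1) k - iterate_term v a b n m (k + 1)"
proof -
  define f where "f i = s3 ((of_int m :: complex) gchoose i)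
    (YY (Y1 v ((n + 1) + int i) a) (of_int m + k - of_nat i) b)" for i
  define g where "g i = s3 ((of_int (m + 1) :: complex) gchoose i)
    (YY (Y1 v (n + int i) a) (of_int (m + 1) + k - of_nat i) b)" for i
  define h where "h i = s3 ((of_int m :: complex) gchoose i)
    (YY (Y1 v (n + int i) a) (of_int m + (k + 1) - of_nat i) b)" for i
  have fin: "finite {i. g i \<noteq> 0}" "finite {i. h i \<noteq> 0}"
    unfolding g_def h_def by (rule finite_iterate_summands)+
  have pascal: "f i = g (Suc i) - h (Suc i)" for i
  proof -
    have "(of_int m :: complex) gchoose i = (of_int (m + 1) gchoose Suc i) - (of_int m gchoose Suc i)"
      using gbinomial_Suc_Suc[of "of_int m :: complex" i] by (simp add: algebra_simps)
    moreover have "of_int (m + 1) + k - of_nat (Suc i) = of_int m + k - of_nat i"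
      "of_int m + (k + 1) - of_nat (Suc i) = of_int m + k - of_nat i"
      "n + int (Suc i) = n + 1 + int i" by simp_all
    ultimately show ?thesis
      unfolding f_def g_def h_def by (simp only: M3.scale_left_diff_distrib)
  qed
  have "g 0 = h 0" unfolding g_def h_def by (simp add: add_ac)
  then have "Sum_any f = Sum_any g - Sum_any h"
    using Sum_any_nat_shift[OF fin(1)] Sum_any_nat_shift[OF fin(2)]
      Sum_any_diff[OF finite_support_Suc[OF fin(1)] finite_support_Suc[OF fin(2)]]
    by (simp add: pascal)
  then show ?thesis unfolding iterate_term_def f_def g_def h_def .
qed

lemma jacobi_defect_Suc:
  "jacobi_defect v a b (n + 1) m k = jacobi_defect v a b n (m + 1) k - jacobi_defect v a b n m (k + 1)"
  unfolding jacobi_defect_def prod_term_Suc rev_prod_term_Suc iterate_term_Suc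
  by (simp add: algebra_simps)

lemma prod_term_translation:
  "prod_term (TV v) a b n 0 k = s3 (- of_int n) (prod_term v a b (n - 1) 0 k)"
proof -
  have coeff: "- of_int n * ((-1) ^ j * (of_int (n - 1) gchoose j))
      = (-1) ^ j * (of_int n gchoose j) * (- of_int (0 + n - int j) :: complex)" for j
    using arg_cong[OF gbinomial_absorb_comp[of "of_int n :: complex" j], of "\<lambda>x. (-1) ^ j * x"]
    by (simp add: algebra_simps)
  have "s3 (- of_int n) (prod_term v a b (n - 1) 0 k)
      = Sum_any (\<lambda>j. s3 (- of_int n) (s3 ((-1) ^ j * (of_int (n - 1) gchoose j))
          (Y3 v (0 + (n - 1) - int j) (YY a (k + of_nat j) b))))"
    unfolding prod_term_def by (rule M3.scale_Sum_any[OF finite_prod_summands])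
  also have "\<dots> = prod_term (TV v) a b n 0 k"
    unfolding prod_term_def Y3_translation M3.scale_scale coeff
    by (simp add: algebra_simps)
  finally show ?thesis ..
qed

lemma rev_prod_term_translation:
  "rev_prod_term (TV v) a b n 0 k = s3 (- of_int n) (rev_prod_term v a b (n - 1) 0 k)"
proof -
  define f where "f j = s3 ((-1::complex) powi (n + int j) * (of_int n gchoose j))
    (YY a (k + of_int n - of_nat j) (Y2 (TV v) (0 + int j) b))" for j
  have fin: "finite {j. f j \<noteq> 0}"
    unfolding f_def by (rule finite_rev_prod_summands)
  have "f 0 = 0"
    unfolding f_def Y2_translation by (simp add: YY_scale2)
  have coeff: "- of_int n * ((-1) powi (n - 1 + int j) * (of_int (n - 1) gchoose j))
      = (-1) powi (n + int (Suc j)) * (of_int n gchoose Suc j) * (- of_int (0 + int (Suc j)) :: complex)"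
    for j
  proof -
    have "(-1::complex) powi (n + int (Suc j)) = (-1) powi ((n - 1 + int j) + 2)"
      by (rule arg_cong[where f = "power_int (-1)"]) simp
    also have "\<dots> = (-1) powi (n - 1 + int j)"
      by (subst power_int_add) simp_all
    finally have "(-1::complex) powi (n + int (Suc j)) = (-1) powi (n - 1 + int j)" .
    then show ?thesis
      using arg_cong[OF gbinomial_absorption[of j "of_int n :: complex"],
          of "\<lambda>x. (-1) powi (n - 1 + int j) * x"]
      by (simp add: algebra_simps)
  qed
  have "s3 (- of_int n) (rev_prod_term v a b (n - 1) 0 k)
      = Sum_any (\<lambda>j. s3 (- of_int n) (s3 ((-1::complex) powi (n - 1 + int j) * (of_int (n - 1) gchoose j))
          (YY a (k + of_int (n - 1) - of_nat j) (Y2 v (0 + int j) b))))"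
    unfolding rev_prod_term_def by (rule M3.scale_Sum_any[OF finite_rev_prod_summands])
  also have "\<dots> = Sum_any (\<lambda>j. f (Suc j))"
    unfolding f_def Y2_translation YY_scale2 M3.scale_scale coeff
    by (simp add: algebra_simps)
  also have "\<dots> = Sum_any f"
    using Sum_any_nat_shift[OF fin] \<open>f 0 = 0\<close> by simp
  also have "\<dots> = rev_prod_term (TV v) a b n 0 k"
    unfolding rev_prod_term_def f_def ..
  finally show ?thesis ..
qed

lemma iterate_term_at_0: "iterate_term v a b n 0 k = YY (Y1 v n a) k b"
  unfolding iterate_term_def by (subst Sum_any_single[of 0]) (auto simp: gbinomial_0_left)

lemma iterate_term_translation:
  "iterate_term (TV v) a b n 0 k = s3 (- of_int n) (iterate_term v a b (n - 1) 0 k)"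
  unfolding iterate_term_at_0 Y1_translation by (rule YY_scale1)

lemma jacobi_defect_translation:
  "jacobi_defect (TV v) a b n 0 k = s3 (- of_int n) (jacobi_defect v a b (n - 1) 0 k)"
  unfolding jacobi_defect_def prod_term_translation rev_prod_term_translation iterate_term_translation
  by (simp add: M3.scale_right_diff_distrib)

lemma prod_term_0: "prod_term v a b 0 m k = Y3 v m (YY a k b)"
  unfolding prod_term_def by (subst Sum_any_single[of 0]) (auto simp: gbinomial_0_left)

lemma rev_prod_term_0: "rev_prod_term v a b 0 m k = YY a k (Y2 v m b)"
  unfolding rev_prod_term_def by (subst Sum_any_single[of 0]) (auto simp: gbinomial_0_left)

lemma jacobi_defect_0_iff_commutator:
  "jacobi_defect v a b 0 m k = 0 \<longleftrightarrow> commutator_coeff s3 Y3 YY Y2 Y1 v a b m k"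
  unfolding jacobi_defect_def prod_term_0 rev_prod_term_0 commutator_coeff_def iterate_term_def
  by simp

lemma prod_term_minus_one:
  "prod_term v a b (-1) 0 k = Sum_any (\<lambda>j::nat. Y3 v (-1 - int j) (YY a (k + of_nat j) b))"
  unfolding prod_term_def by (simp add: gbinomial_minus_one)

lemma rev_prod_term_minus_one:
  "rev_prod_term v a b (-1) 0 k = - Sum_any (\<lambda>j::nat. YY a (k - 1 - of_nat j) (Y2 v (int j) b))"
proof -
  have "(-1::complex) powi (-1 + int j) = - ((-1) ^ j)" for j
    by (simp add: power_int_diff)
  then have "(-1::complex) powi (-1 + int j) * (of_int (-1) gchoose j) = -1" for j
    using gbinomial_minus_one[of j, where 'a = complex] by simp
  then show ?thesis
    unfolding rev_prod_term_def by (simp add: Sum_any_negf)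
qed

lemma jacobi_defect_minus_one_iff_normal_order:
  "jacobi_defect v a b (-1) 0 k = 0 \<longleftrightarrow> normal_order_coeff Y3 YY Y2 Y1 v a b k"
  unfolding jacobi_defect_def prod_term_minus_one rev_prod_term_minus_one iterate_term_at_0
    normal_order_coeff_def
  by (simp add: algebra_simps) (metis add.commute)

lemma jacobi_defect_negative_at_0:
  assumes "\<And>v k. jacobi_defect v a b (-1) 0 k = 0"
  shows "jacobi_defect v a b (-1 - int p) 0 k = 0"
proof (induction p arbitrary: v k)
  case 0
  then show ?case using assms by simp
next
  case (Suc p)
  have "s3 (of_nat (Suc p)) (jacobi_defect v a b (-1 - int (Suc p)) 0 k) = 0"
    using jacobi_defect_translation[of v a b "-1 - int p" k] Suc.IH[of "TV v" k]
    by (simp add: add_ac)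
  then show ?case by (simp only: M3.scale_eq_0_iff of_nat_eq_0_iff) simp
qed

lemma jacobi_defect_eq_0:
  assumes D0: "\<And>v m k. jacobi_defect v a b 0 m k = 0"
    and D_minus_one: "\<And>v k. jacobi_defect v a b (-1) 0 k = 0"
  shows "jacobi_defect v a b n m k = 0"
proof -
  have "\<forall>v m k. jacobi_defect v a b n m k = 0"
  proof (induction n rule: int_induct[where k = 0])
    case base
    show ?case using D0 by blast
  next
    case (step1 i)
    then show ?case by (simp add: jacobi_defect_Suc)
  next
    case (step2 i)
    have "jacobi_defect v a b (i - 1) m k = 0" for v m k
    proof (rule shift_invariant_constant)
      show "jacobi_defect v a b (i - 1) (m + 1) k = jacobi_defect v a b (i - 1) m (k + 1)" for m k
        using jacobi_defect_Suc[of v a b "i - 1" m k] step2(2) by simp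
      show "jacobi_defect v a b (i - 1) 0 k = 0" for k
        using jacobi_defect_negative_at_0[OF D_minus_one, of v "nat (- i)" k] step2(1) by simp
    qed
    then show ?case by blast
  qed
  then show ?thesis by blast
qed

end

theorem proposition3p7:
  fixes sV :: "complex \<Rightarrow> 'v::ab_group_add \<Rightarrow> 'v" and vac :: 'v
    and TV :: "'v \<Rightarrow> 'v" and Y :: "'v \<Rightarrow> int \<Rightarrow> 'v \<Rightarrow> 'v"
    and s1 :: "complex \<Rightarrow> 'm1::ab_group_add \<Rightarrow> 'm1" and T1 :: "'m1 \<Rightarrow> 'm1"
    and Y1 :: "'v \<Rightarrow> int \<Rightarrow> 'm1 \<Rightarrow> 'm1"
    and s2 :: "complex \<Rightarrow> 'm2::ab_group_add \<Rightarrow> 'm2" and T2 :: "'m2 \<Rightarrow> 'm2"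
    and Y2 :: "'v \<Rightarrow> int \<Rightarrow> 'm2 \<Rightarrow> 'm2"
    and s3 :: "complex \<Rightarrow> 'm3::ab_group_add \<Rightarrow> 'm3" and T3 :: "'m3 \<Rightarrow> 'm3"
    and Y3 :: "'v \<Rightarrow> int \<Rightarrow> 'm3 \<Rightarrow> 'm3"
    and S :: "complex set"
    and YY :: "'m1 \<Rightarrow> complex \<Rightarrow> 'm2 \<Rightarrow> 'm3"
  assumes VA: "vertex_algebra sV vac TV Y"
    and M1: "va_module sV vac Y s1 T1 Y1"
    and M2: "va_module sV vac Y s2 T2 Y2"
    and M3: "va_module sV vac Y s3 T3 Y3"
    and S: "admissible_exponents S"
    and YY_lin1: "\<And>n b. Vector_Spaces.linear s1 s3 (\<lambda>a. YY a n b)"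
    and YY_lin2: "\<And>a n. Vector_Spaces.linear s2 s3 (YY a n)"
    and YY_S: "\<And>a b. in_series_S S (\<lambda>n. YY a n b)"
    and YY_T: "\<And>a n b. T3 (YY a n b) - YY a n (T2 b) = YY (T1 a) n b"
    and YY_D: "\<And>a n b. YY (T1 a) n b = s3 (- n) (YY a (n - 1) b)"
  shows "(\<forall>v a b n m k. jacobi_coeff s3 Y3 YY Y2 Y1 v a b n m k) \<longleftrightarrow>
         ((\<forall>v a b k. normal_order_coeff Y3 YY Y2 Y1 v a b k) \<and>
          (\<forall>v a b m k. commutator_coeff s3 Y3 YY Y2 Y1 v a b m k))"
proof -
  interpret jacobi_terms s1 s2 s3 Y1 Y2 Y3 YY TV
  proof (rule jacobi_terms.intro)
    show "vector_space s3" "\<And>v n. Vector_Spaces.linear s3 s3 (Y3 v n)"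
      using M3 unfolding va_module_def by auto
    show "\<exists>N. \<forall>n\<ge>N. Y1 v n a = 0" for v a
      using M1 unfolding va_module_def by auto
    show "\<exists>N. \<forall>n\<ge>N. Y2 v n b = 0" for v b
      using M2 unfolding va_module_def by auto
    show "finite {j::nat. YY a (k + of_nat j) b \<noteq> 0}" for a b k
      using YY_S by (rule in_series_S_finite_support)
    show "Y1 (TV v) n x = s1 (- of_int n) (Y1 v (n - 1) x)" for v n x
      by (rule va_module_translation[OF VA M1])
    show "Y2 (TV v) n x = s2 (- of_int n) (Y2 v (n - 1) x)" for v n x
      by (rule va_module_translation[OF VA M2])
    show "Y3 (TV v) n x = s3 (- of_int n) (Y3 v (n - 1) x)" for v n x
      by (rule va_module_translation[OF VA M3])
  qed (fact YY_lin1 YY_lin2)+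
  show ?thesis
    unfolding jacobi_coeff_iff_defect jacobi_defect_0_iff_commutator[symmetric]
      jacobi_defect_minus_one_iff_normal_order[symmetric]
    by (auto intro: jacobi_defect_eq_0)
qed

end
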